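(* Let $\Gamma$ be a finite, compact, connected, bipartite metric graph with first Betti number $\beta$, and let $B\subset\partial\Gamma$ be nonempty. Then $$\dim\ker L^{\rm st,D}(\Gamma,B)=0\qquad\text{and}\qquad\dim\ker L^{\rm a/st,N}(\Gamma,B)=\beta+|B|-1.$$
   Context: A finite compact metric graph $\Gamma$ consists of finitely many edges $e_n=[x_{2n-1},x_{2n}]\subset\mathbb R$, $n=1,\dots,E$, of positive lengths and a vertex set $\mathcal V=\{v_1,\dots,v_V\}$ which is a partition of the set of all edge endpoints; the degree of a vertex is the number of endpoints it contains (loops count twice); $\partial\Gamma$ is the set of vertices of degree one; $\beta=E-V+1$. $\Gamma$ is bipartite if $\mathcal V=\mathcal V_1\sqcup\mathcal V_2$ with every edge having one endpoint in a vertex of $\mathcal V_1$ and the other in a vertex of $\mathcal V_2$. $f(x_j)$ denotes the limit of $f$ at endpoint $x_j$, and $\partial f(x_j)=f'(x_j)$ if $x_j$ is a left endpoint, $-f'(x_j)$ if a right endpoint. $L^{\rm st,D}(\Gamma,B)$ acts as $-f''$ on each edge with domain all $f\in W^2_2(\Gamma\setminus\mathcal V)=\bigoplus_nW^2_2(e_n)$ satisfying $f=0$ at each vertex of $B$ and standard conditions ($f(x_i)=f(x_j)$ for $x_i,x_j\in v$, $\sum_{x_j\in v}\partial f(x_j)=0$) at all other vertices $v$. $L^{\rm a/st,N}(\Gamma,B)$ acts as $-f''$ with domain all $f\in W^2_2(\Gamma\setminus\mathcal V)$ satisfying $\partial f=0$ at each vertex of $B$ and anti-standard conditions ($\sum_{x_j\in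 v}f(x_j)=0$, $\partial f(x_i)=\partial f(x_j)$ for $x_i,x_j\in v$) at all other vertices $v$. *)

theory Defs
  imports "HOL-Analysis.Analysis"
begin

text \<open>
  Edges are indexed by n < E; edge n is the interval [a n, b n] with a n < b n.
  Endpoints are indexed by j < 2*E: endpoint 2n is the left endpoint a n of edge n,
  endpoint 2n+1 is the right endpoint b n of edge n.
  The vertex set V is a partition of the endpoint index set {0..<2*E}.
  A function on the graph is f :: nat => real => real, where f n is its restriction
  to edge n; we normalise f n x = 0 off the edge and f n = 0 for n >= E.
\<close>

definition is_metric_graph :: "nat \<Rightarrow> (nat \<Rightarrow> real) \<Rightarrow> (nat \<Rightarrow> real) \<Rightarrow> nat set set \<Rightarrow> bool" where
  "is_metric_graph E a b V \<longleftrightarrow>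
     (\<forall>n<E. a n < b n) \<and>
     (\<forall>v\<in>V. v \<noteq> {}) \<and>
     (\<forall>v\<in>V. \<forall>w\<in>V. v \<noteq> w \<longrightarrow> v \<inter> w = {}) \<and>
     \<Union>V = {0..<2*E}"

definition vadj :: "nat \<Rightarrow> nat set set \<Rightarrow> (nat set \<times> nat set) set" where
  "vadj E V = {(u, w). u \<in> V \<and> w \<in> V \<and>
      (\<exists>n<E. (2*n \<in> u \<and> 2*n+1 \<in> w) \<or> (2*n+1 \<in> u \<and> 2*n \<in> w))}"

definition connected_graph :: "nat \<Rightarrow> nat set set \<Rightarrow> bool" where
  "connected_graph E V \<longleftrightarrow> (\<forall>u\<in>V. \<forall>w\<in>V. (u, w) \<in> (vadj E V)\<^sup>*)"

definition bipartite_graph :: "nat \<Rightarrow> nat set set \<Rightarrow> bool" where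
  "bipartite_graph E V \<longleftrightarrow> (\<exists>V1 V2. V1 \<union> V2 = V \<and> V1 \<inter> V2 = {} \<and>
     (\<forall>n<E. \<forall>u\<in>V. \<forall>w\<in>V. 2*n \<in> u \<longrightarrow> 2*n+1 \<in> w \<longrightarrow>
         ((u \<in> V1 \<and> w \<in> V2) \<or> (u \<in> V2 \<and> w \<in> V1))))"

text \<open>Degree of a vertex = number of endpoints it contains; boundary = degree-one vertices.\<close>
definition graph_boundary :: "nat set set \<Rightarrow> nat set set" where
  "graph_boundary V = {v \<in> V. card v = 1}"

definition betti :: "nat \<Rightarrow> nat set set \<Rightarrow> int" where
  "betti E V = int E - int (card V) + 1"

text \<open>Value f(x_j) and normal derivative \<partial>f(x_j) at endpoint j
  (one-sided limits, realised as one-sided derivatives/values on the closed edge).\<close>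
definition endval :: "(nat \<Rightarrow> real) \<Rightarrow> (nat \<Rightarrow> real) \<Rightarrow> (nat \<Rightarrow> real \<Rightarrow> real) \<Rightarrow> nat \<Rightarrow> real" where
  "endval a b f j = (if even j then f (j div 2) (a (j div 2)) else f (j div 2) (b (j div 2)))"

definition endder :: "(nat \<Rightarrow> real) \<Rightarrow> (nat \<Rightarrow> real) \<Rightarrow> (nat \<Rightarrow> real \<Rightarrow> real) \<Rightarrow> nat \<Rightarrow> real" where
  "endder a b f j = (let n = j div 2 in
     if even j then vector_derivative (f n) (at (a n) within {a n..b n})
     else - vector_derivative (f n) (at (b n) within {a n..b n}))"

text \<open>Functions in the (classical) domain that are annihilated by -d^2/dx^2 on every edge:
  f n is C^1 on the closed edge (one-sided derivatives at endpoints),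
  its derivative is differentiable with -f'' = 0 on the edge.\<close>
definition edge_harmonic :: "nat \<Rightarrow> (nat \<Rightarrow> real) \<Rightarrow> (nat \<Rightarrow> real) \<Rightarrow> (nat \<Rightarrow> real \<Rightarrow> real) \<Rightarrow> bool" where
  "edge_harmonic E a b f \<longleftrightarrow>
     (\<forall>n. n \<ge> E \<longrightarrow> (\<forall>x. f n x = 0)) \<and>
     (\<forall>n<E. \<forall>x. x \<notin> {a n..b n} \<longrightarrow> f n x = 0) \<and>
     (\<forall>n<E. \<exists>g'. (\<forall>x\<in>{a n..b n}. (f n has_real_derivative g' x) (at x within {a n..b n})) \<and>
                 (\<forall>x\<in>{a n..b n}. (g' has_real_derivative 0) (at x within {a n..b n})))"

definition ker_stD :: "nat \<Rightarrow> (nat \<Rightarrow> real) \<Rightarrow> (nat \<Rightarrow> real) \<Rightarrow> nat set set \<Rightarrow> nat set set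
    \<Rightarrow> (nat \<Rightarrow> real \<Rightarrow> real) set" where
  "ker_stD E a b V B = {f. edge_harmonic E a b f \<and>
     (\<forall>v\<in>B. \<forall>j\<in>v. endval a b f j = 0) \<and>
     (\<forall>v\<in>V - B. (\<forall>i\<in>v. \<forall>j\<in>v. endval a b f i = endval a b f j) \<and>
                 (\<Sum>j\<in>v. endder a b f j) = 0)}"

definition ker_astN :: "nat \<Rightarrow> (nat \<Rightarrow> real) \<Rightarrow> (nat \<Rightarrow> real) \<Rightarrow> nat set set \<Rightarrow> nat set set
    \<Rightarrow> (nat \<Rightarrow> real \<Rightarrow> real) set" where
  "ker_astN E a b V B = {f. edge_harmonic E a b f \<and>
     (\<forall>v\<in>B. \<forall>j\<in>v. endder a b f j = 0) \<and>
     (\<forall>v\<in>V - B. (\<Sum>j\<in>v. endval a b f j) = 0 \<and>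
                 (\<forall>i\<in>v. \<forall>j\<in>v. endder a b f i = endder a b f j))}"

definition has_dim :: "('i \<Rightarrow> real \<Rightarrow> real) set \<Rightarrow> nat \<Rightarrow> bool" where
  "has_dim S d \<longleftrightarrow> (\<exists>u :: nat \<Rightarrow> 'i \<Rightarrow> real \<Rightarrow> real.
      (\<forall>k<d. u k \<in> S) \<and>
      (\<forall>f\<in>S. \<exists>c :: nat \<Rightarrow> real. f = (\<lambda>n x. \<Sum>k<d. c k * u k n x)) \<and>
      (\<forall>c :: nat \<Rightarrow> real. (\<lambda>n x. \<Sum>k<d. c k * u k n x) = (\<lambda>n x. 0) \<longrightarrow> (\<forall>k<d. c k = 0)))"

end

theory Submission
  imports Defs
begin

text \<open>
  A function in either kernel is affine on every edge. For the standard/Dirichlet operator,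
  the vertex conditions make the boundary form \<open>\<Sum>\<^sub>j \<partial>f(x\<^sub>j) f(x\<^sub>j)\<close> vanish, while on the other hand it
  equals \<open>-\<Sum>\<^sub>n s\<^sub>n\<^sup>2 |e\<^sub>n|\<close> for the slopes \<open>s\<^sub>n\<close>; so \<open>f\<close> is constant on edges, hence on the
  connected graph, and it vanishes at the Dirichlet vertices. For the anti-standard/Neumann
  operator the derivative at both ends of an edge differs only by sign, so by connectedness the
  Neumann condition at a vertex of \<open>B\<close> kills all slopes. The kernel then consists of the
  edgewise constant functions satisfying one linear equation for each vertex outside \<open>B\<close>; these
  \<open>|V| - |B|\<close> equations in \<open>E\<close> unknowns are independent (again by propagation from \<open>B\<close>), so the
  kernel has dimension \<open>E - |V| + |B| = \<beta> + |B| - 1\<close>.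
\<close>

section \<open>Linear systems with independent equations\<close>

definition lincomb :: "nat \<Rightarrow> (nat \<Rightarrow> real) \<Rightarrow> (nat \<Rightarrow> 'a \<Rightarrow> real) \<Rightarrow> 'a \<Rightarrow> real" where
  "lincomb d c u x = (\<Sum>k<d. c k * u k x)"

definition has_fun_dim :: "('a \<Rightarrow> real) set \<Rightarrow> nat \<Rightarrow> bool" where
  "has_fun_dim S d \<longleftrightarrow> (\<exists>u.
      (\<forall>k<d. u k \<in> S) \<and>
      (\<forall>f\<in>S. \<exists>c. f = lincomb d c u) \<and>
      (\<forall>c. lincomb d c u = (\<lambda>_. 0) \<longrightarrow> (\<forall>k<d. c k = 0)))"

lemma has_dim_if_has_fun_dim_uncurried:
  assumes "has_fun_dim (case_prod ` S) d"
  shows "has_dim S d"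
proof -
  obtain u where u_in: "\<forall>k<d. u k \<in> case_prod ` S"
    and spans: "\<forall>f\<in>case_prod ` S. \<exists>c. f = lincomb d c u"
    and indep: "\<forall>c. lincomb d c u = (\<lambda>_. 0) \<longrightarrow> (\<forall>k<d. c k = 0)"
    using assms unfolding has_fun_dim_def by blast
  show ?thesis
    unfolding has_dim_def
  proof (intro exI[of _ "\<lambda>k. curry (u k)"] conjI allI impI ballI)
    fix k assume "k < d"
    then show "curry (u k) \<in> S" using u_in by force
  next
    fix f assume "f \<in> S"
    then obtain c where "case_prod f = lincomb d c u" using spans by blast
    then have "f = curry (lincomb d c u)" by (metis curry_case_prod)
    then show "\<exists>c. f = (\<lambda>n x. \<Sum>k<d. c k * curry (u k) n x)"
      by (intro exI[of _ c]) (simp add: lincomb_def fun_eq_iff)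
  next
    fix c k assume "(\<lambda>n x. \<Sum>k<d. c k * curry (u k) n x) = (\<lambda>n x. 0)" and "k < d"
    moreover from this(1) have "lincomb d c u = (\<lambda>_. 0)"
      by (auto simp: lincomb_def fun_eq_iff)
    ultimately show "c k = 0" using indep by blast
  qed
qed

lemma has_fun_dim_transfer:
  assumes "has_fun_dim S d"
    and maps_to: "\<And>y. y \<in> S \<Longrightarrow> \<phi> y \<in> T"
    and onto: "\<And>x. x \<in> T \<Longrightarrow> \<exists>y\<in>S. x = \<phi> y"
    and linear: "\<And>c u. \<phi> (lincomb d c u) = lincomb d c (\<lambda>k. \<phi> (u k))"
    and closed: "\<And>c u. \<forall>k<d. u k \<in> S \<Longrightarrow> lincomb d c u \<in> S"
    and kernel: "\<And>y. y \<in> S \<Longrightarrow> \<phi> y = (\<lambda>_. 0) \<Longrightarrow> y = (\<lambda>_. 0)"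
  shows "has_fun_dim T d"
proof -
  obtain u where u_in: "\<forall>k<d. u k \<in> S"
    and spans: "\<forall>y\<in>S. \<exists>c. y = lincomb d c u"
    and indep: "\<forall>c. lincomb d c u = (\<lambda>_. 0) \<longrightarrow> (\<forall>k<d. c k = 0)"
    using assms(1) unfolding has_fun_dim_def by blast
  show ?thesis
    unfolding has_fun_dim_def
  proof (intro exI[of _ "\<lambda>k. \<phi> (u k)"] conjI allI impI ballI)
    fix k assume "k < d"
    then show "\<phi> (u k) \<in> T" using u_in maps_to by blast
  next
    fix x assume "x \<in> T"
    then obtain y where "y \<in> S" "x = \<phi> y" using onto by blast
    then show "\<exists>c. x = lincomb d c (\<lambda>k. \<phi> (u k))" using spans linear by metis
  next
    fix c k assume "lincomb d c (\<lambda>k. \<phi> (u k)) = (\<lambda>_. 0)" and "k < d"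
    moreover from this(1) have "lincomb d c u = (\<lambda>_. 0)"
      using kernel closed u_in linear by metis
    ultimately show "c k = 0" using indep by blast
  qed
qed

lemma has_fun_dim_supported:
  fixes I :: "'a set"
  assumes "finite I"
  shows "has_fun_dim {x. \<forall>i. i \<notin> I \<longrightarrow> x i = 0} (card I)"
proof -
  obtain h :: "nat \<Rightarrow> 'a" where h: "bij_betw h {..<card I} I"
    using ex_bij_betw_nat_finite[OF assms] by (auto simp: lessThan_atLeast0)
  define u :: "nat \<Rightarrow> 'a \<Rightarrow> real" where "u k i = (if i = h k then 1 else 0)" for k i
  have unit_sum: "(\<Sum>k'<card I. c k' * u k' (h k)) = c k" if "k < card I" for c :: "nat \<Rightarrow> real" and k
  proof -
    have "(\<Sum>k'<card I. c k' * u k' (h k)) = (\<Sum>k'<card I. if k' = k then c k else 0)"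
      using h that by (intro sum.cong) (auto simp: u_def bij_betw_def inj_on_def)
    then show ?thesis using that by simp
  qed
  show ?thesis
    unfolding has_fun_dim_def
  proof (intro exI[of _ u] conjI allI impI ballI)
    fix k assume "k < card I"
    then show "u k \<in> {x. \<forall>i. i \<notin> I \<longrightarrow> x i = 0}"
      using h by (auto simp: u_def bij_betw_def)
  next
    fix x :: "'a \<Rightarrow> real" assume x: "x \<in> {x. \<forall>i. i \<notin> I \<longrightarrow> x i = 0}"
    have "x i = lincomb (card I) (\<lambda>k. x (h k)) u i" for i
    proof (cases "i \<in> I")
      case True
      then obtain k where "k < card I" "i = h k" using h by (auto simp: bij_betw_def)
      then show ?thesis using unit_sum by (simp add: lincomb_def)
    next
      case False
      then have "i \<noteq> h k" if "k < card I" for k using h that by (auto simp: bij_betw_def)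
      then show ?thesis using x False by (simp add: lincomb_def u_def)
    qed
    then show "\<exists>c. x = lincomb (card I) c u" by blast
  next
    fix c k assume zero: "lincomb (card I) c u = (\<lambda>_. 0)" and k: "k < card I"
    have "lincomb (card I) c u (h k) = 0" using zero by simp
    then show "c k = 0" using unit_sum[OF k, of c] by (simp add: lincomb_def)
  qed
qed

definition solutions :: "nat set \<Rightarrow> 'p set \<Rightarrow> ('p \<Rightarrow> nat \<Rightarrow> real) \<Rightarrow> (nat \<Rightarrow> real) set" where
  "solutions I P L = {x. (\<forall>i. i \<notin> I \<longrightarrow> x i = 0) \<and> (\<forall>p\<in>P. (\<Sum>i\<in>I. L p i * x i) = 0)}"

definition rows_independent :: "nat set \<Rightarrow> 'p set \<Rightarrow> ('p \<Rightarrow> nat \<Rightarrow> real) \<Rightarrow> bool" where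
  "rows_independent I P L \<longleftrightarrow> (\<forall>\<psi>. (\<forall>i\<in>I. (\<Sum>p\<in>P. \<psi> p * L p i) = 0) \<longrightarrow> (\<forall>p\<in>P. \<psi> p = 0))"

lemma sum_mult_lincomb:
  "(\<Sum>i\<in>I. w i * lincomb d c u i) = (\<Sum>k<d. c k * (\<Sum>i\<in>I. w i * u k i))"
  by (simp add: lincomb_def sum_distrib_left sum.swap[of _ I] mult.left_commute)

lemma solutions_lincomb:
  assumes "\<forall>k<d. u k \<in> solutions I P L"
  shows "lincomb d c u \<in> solutions I P L"
  using assms by (simp add: solutions_def sum_mult_lincomb) (simp add: lincomb_def)

lemma rows_independent_pivot:
  assumes "rows_independent I P L" "finite P" "p \<in> P"
  obtains k where "k \<in> I" "L p k \<noteq> 0"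
proof (rule ccontr)
  assume "\<not> thesis"
  then have zero_row: "\<forall>i\<in>I. L p i = 0" using that by blast
  define \<psi> :: "_ \<Rightarrow> real" where "\<psi> q = (if q = p then 1 else 0)" for q
  have "(\<Sum>q\<in>P. \<psi> q * L q i) = (\<Sum>q\<in>P. if p = q then L q i else 0)" for i
    by (rule sum.cong) (auto simp: \<psi>_def)
  then have "\<forall>i\<in>I. (\<Sum>q\<in>P. \<psi> q * L q i) = 0"
    using assms(2,3) zero_row by simp
  then have "\<psi> p = 0" using assms(1,3) unfolding rows_independent_def by blast
  then show False by (simp add: \<psi>_def)
qed

definition eliminate :: "'p \<Rightarrow> nat \<Rightarrow> ('p \<Rightarrow> nat \<Rightarrow> real) \<Rightarrow> 'p \<Rightarrow> nat \<Rightarrow> real" where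
  "eliminate p k L q i = L q i - L q k / L p k * L p i"

definition back_subst :: "nat set \<Rightarrow> ('p \<Rightarrow> nat \<Rightarrow> real) \<Rightarrow> 'p \<Rightarrow> nat \<Rightarrow> (nat \<Rightarrow> real) \<Rightarrow> nat \<Rightarrow> real" where
  "back_subst I L p k y = y(k := - (\<Sum>i\<in>I - {k}. L p i * y i) / L p k)"

lemma rows_independent_eliminate:
  assumes indep: "rows_independent I (insert p P) L" and "finite P" "p \<notin> P"
    and "k \<in> I" "L p k \<noteq> 0"
  shows "rows_independent (I - {k}) P (eliminate p k L)"
  unfolding rows_independent_def
proof (intro allI impI ballI)
  fix \<psi> q
  assume \<psi>: "\<forall>i\<in>I - {k}. (\<Sum>q\<in>P. \<psi> q * eliminate p k L q i) = 0" and "q \<in> P"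
  define \<psi>' where "\<psi>' = \<psi>(p := - (\<Sum>q\<in>P. \<psi> q * L q k) / L p k)"
  have P_sum: "(\<Sum>q\<in>P. \<psi>' q * L q i) = (\<Sum>q\<in>P. \<psi> q * L q i)" for i
    using \<open>p \<notin> P\<close> unfolding \<psi>'_def by (intro sum.cong) auto
  have combined: "(\<Sum>q\<in>insert p P. \<psi>' q * L q i) = (\<Sum>q\<in>P. \<psi> q * eliminate p k L q i)" for i
  proof -
    have "(\<Sum>q\<in>P. \<psi> q * eliminate p k L q i)
        = (\<Sum>q\<in>P. \<psi> q * L q i) - (\<Sum>q\<in>P. \<psi> q * L q k) / L p k * L p i"
      by (simp add: eliminate_def right_diff_distrib sum_subtractf sum_distrib_right
          sum_divide_distrib mult.assoc)
    moreover have "(\<Sum>q\<in>insert p P. \<psi>' q * L q i) = \<psi>' p * L p i + (\<Sum>q\<in>P. \<psi> q * L q i)"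
      using \<open>finite P\<close> \<open>p \<notin> P\<close> by (simp add: P_sum)
    ultimately show ?thesis by (simp add: \<psi>'_def)
  qed
  have pivot_column: "(\<Sum>q\<in>P. \<psi> q * eliminate p k L q k) = 0"
    using \<open>L p k \<noteq> 0\<close> by (simp add: eliminate_def)
  have "\<forall>i\<in>I. (\<Sum>q\<in>insert p P. \<psi>' q * L q i) = 0"
  proof
    fix i assume "i \<in> I"
    then show "(\<Sum>q\<in>insert p P. \<psi>' q * L q i) = 0"
      using \<psi> pivot_column by (cases "i = k") (simp_all add: combined)
  qed
  then have "\<psi>' q = 0" using indep \<open>q \<in> P\<close> unfolding rows_independent_def by blast
  moreover have "q \<noteq> p" using \<open>q \<in> P\<close> \<open>p \<notin> P\<close> by blast
  ultimately show "\<psi> q = 0" by (simp add: \<psi>'_def)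
qed

lemma solutions_insert_iff:
  assumes "finite I" "k \<in> I" "L p k \<noteq> 0"
  shows "x \<in> solutions I (insert p P) L \<longleftrightarrow>
    x k = - (\<Sum>i\<in>I - {k}. L p i * x i) / L p k \<and>
    x(k := 0) \<in> solutions (I - {k}) P (eliminate p k L)"
proof -
  let ?S = "\<lambda>q. \<Sum>i\<in>I - {k}. L q i * x i"
  have split: "(\<Sum>i\<in>I. L q i * x i) = L q k * x k + ?S q" for q
    using assms(1,2) by (simp add: sum.remove)
  have erase_k: "(\<Sum>i\<in>I - {k}. g i * (x(k := 0)) i) = (\<Sum>i\<in>I - {k}. g i * x i)" for g
    by (intro sum.cong) auto
  have eliminated: "(\<Sum>i\<in>I - {k}. eliminate p k L q i * x i) = ?S q - L q k / L p k * ?S p" for q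
    by (simp add: eliminate_def left_diff_distrib sum_subtractf sum_distrib_left mult.assoc)
  have row_p: "(\<Sum>i\<in>I. L p i * x i) = 0 \<longleftrightarrow> x k = - ?S p / L p k"
    unfolding split using assms(3) by (auto simp: field_simps)
  have row_q: "(\<Sum>i\<in>I. L q i * x i) = (\<Sum>i\<in>I - {k}. eliminate p k L q i * (x(k := 0)) i)"
    if "x k = - ?S p / L p k" for q
    using that by (simp add: split erase_k eliminated)
  have support: "(\<forall>i. i \<notin> I \<longrightarrow> x i = 0) \<longleftrightarrow> (\<forall>i. i \<notin> I - {k} \<longrightarrow> (x(k := 0)) i = 0)"
    using assms(2) by auto
  show ?thesis
    unfolding solutions_def using row_p row_q support by auto
qed

lemma solutions_insert_eq_image:
  assumes "finite I" "k \<in> I" "L p k \<noteq> 0"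
  shows "solutions I (insert p P) L = back_subst I L p k ` solutions (I - {k}) P (eliminate p k L)"
proof -
  have unchanged: "(\<Sum>i\<in>I - {k}. L p i * y i) = (\<Sum>i\<in>I - {k}. L p i * z i)"
    if "\<forall>i. i \<noteq> k \<longrightarrow> y i = z i" for y z :: "nat \<Rightarrow> real"
    using that by (intro sum.cong) auto
  show ?thesis
  proof (intro set_eqI iffI)
    fix x assume "x \<in> solutions I (insert p P) L"
    then have pivot: "x k = - (\<Sum>i\<in>I - {k}. L p i * x i) / L p k"
      and erased: "x(k := 0) \<in> solutions (I - {k}) P (eliminate p k L)"
      using solutions_insert_iff[of I k L p x P] assms by blast+
    have "x = back_subst I L p k (x(k := 0))"
      using pivot unchanged[of "x(k := 0)" x] by (auto simp: back_subst_def fun_eq_iff)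
    then show "x \<in> back_subst I L p k ` solutions (I - {k}) P (eliminate p k L)"
      using erased by blast
  next
    fix x assume "x \<in> back_subst I L p k ` solutions (I - {k}) P (eliminate p k L)"
    then obtain y where y: "y \<in> solutions (I - {k}) P (eliminate p k L)" "x = back_subst I L p k y"
      by blast
    then have "y k = 0" by (simp add: solutions_def)
    then have "x(k := 0) = y" using y(2) by (auto simp: back_subst_def)
    moreover have "x k = - (\<Sum>i\<in>I - {k}. L p i * x i) / L p k"
      using y(2) unchanged[of x y] by (simp add: back_subst_def)
    ultimately show "x \<in> solutions I (insert p P) L"
      using solutions_insert_iff[of I k L p x P] assms y(1) by blast
  qed
qed

lemma back_subst_lincomb:
  "back_subst I L p k (lincomb d c u) = lincomb d c (\<lambda>j. back_subst I L p k (u j))"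
proof
  fix i
  show "back_subst I L p k (lincomb d c u) i = lincomb d c (\<lambda>j. back_subst I L p k (u j)) i"
  proof (cases "i = k")
    case True
    have "back_subst I L p k (lincomb d c u) k
        = - (\<Sum>j<d. c j * (\<Sum>i\<in>I - {k}. L p i * u j i)) / L p k"
      by (simp add: back_subst_def sum_mult_lincomb)
    also have "\<dots> = lincomb d c (\<lambda>j. back_subst I L p k (u j)) k"
      by (simp add: lincomb_def back_subst_def sum_divide_distrib[of _ "{..<d}"] sum_negf)
    finally show ?thesis using True by simp
  qed (simp add: back_subst_def lincomb_def)
qed

lemma has_fun_dim_solutions:
  assumes "finite P" "finite I" "rows_independent I P L"
  shows "card P \<le> card I \<and> has_fun_dim (solutions I P L) (card I - card P)"
  using assms
proof (induction P arbitrary: I L rule: finite_induct)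
  case empty
  then show ?case using has_fun_dim_supported[of I] by (simp add: solutions_def)
next
  case (insert p P)
  obtain k where k: "k \<in> I" "L p k \<noteq> 0"
    using rows_independent_pivot[of I "insert p P" L p] insert by blast
  let ?I' = "I - {k}" and ?L' = "eliminate p k L"
  have IH: "card P \<le> card ?I'" "has_fun_dim (solutions ?I' P ?L') (card ?I' - card P)"
    using insert.IH[of ?I' ?L'] rows_independent_eliminate[of I p P L k] insert k by auto
  have kernel: "y = (\<lambda>_. 0)" if "y \<in> solutions ?I' P ?L'" "back_subst I L p k y = (\<lambda>_. 0)" for y
  proof
    fix i
    show "y i = 0"
      using that(1) fun_cong[OF that(2), of i]
      by (cases "i = k") (auto simp: solutions_def back_subst_def)
  qed
  have "has_fun_dim (solutions I (insert p P) L) (card ?I' - card P)"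
    using solutions_insert_eq_image[of I k L p P] insert.prems(1) k
    by (intro has_fun_dim_transfer[OF IH(2), of "back_subst I L p k"])
      (auto simp: back_subst_lincomb solutions_lincomb kernel)
  moreover have "card ?I' = card I - 1" "card (insert p P) = card P + 1"
    using insert k by auto
  moreover have "card I \<ge> 1" using k(1) insert.prems(1) card_gt_0_iff[of I] by auto
  ultimately show ?case using IH(1) by (simp add: diff_diff_add)
qed

section \<open>Metric graphs\<close>

lemma affine_if_second_derivative_zero:
  fixes g g' :: "real \<Rightarrow> real"
  assumes "a < b"
    and g: "\<forall>x\<in>{a..b}. (g has_real_derivative g' x) (at x within {a..b})"
    and g': "\<forall>x\<in>{a..b}. (g' has_real_derivative 0) (at x within {a..b})"
  obtains s where "\<forall>x\<in>{a..b}. g x = g a + s * (x - a)"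
    and "vector_derivative g (at a within {a..b}) = s"
    and "vector_derivative g (at b within {a..b}) = s"
proof -
  have zero_map: "(*) 0 = (\<lambda>_. 0 :: real)" by auto
  have "\<exists>s. \<forall>x\<in>{a..b}. g' x = s"
    using g' by (intro has_derivative_zero_constant) (auto simp: has_field_derivative_def zero_map)
  then obtain s where s: "\<forall>x\<in>{a..b}. g' x = s" by blast
  then have g_s: "(g has_real_derivative s) (at x within {a..b})" if "x \<in> {a..b}" for x
    using g that by metis
  have "((\<lambda>x. g x - s * x) has_real_derivative 0) (at x within {a..b})" if "x \<in> {a..b}" for x
    using g_s[OF that] by (auto intro!: derivative_eq_intros)
  then have "\<exists>c. \<forall>x\<in>{a..b}. g x - s * x = c"
    by (intro has_derivative_zero_constant) (auto simp: has_field_derivative_def zero_map)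
  then obtain c where c: "\<forall>x\<in>{a..b}. g x - s * x = c" by blast
  have affine: "\<forall>x\<in>{a..b}. g x = g a + s * (x - a)"
  proof
    fix x assume "x \<in> {a..b}"
    then have "g x - s * x = c" "g a - s * a = c" using c \<open>a < b\<close> by auto
    then show "g x = g a + s * (x - a)" by (simp add: algebra_simps)
  qed
  have slope: "vector_derivative g (at x within {a..b}) = s" if "x \<in> {a..b}" for x
    using \<open>a < b\<close> that g_s[OF that]
    by (intro vector_derivative_within_closed_interval)
      (auto simp: has_real_derivative_iff_has_vector_derivative)
  show ?thesis
    by (rule that[OF affine slope slope]) (use \<open>a < b\<close> in auto)
qed

lemma sum_lessThan_double:
  fixes g :: "nat \<Rightarrow> 'a :: comm_monoid_add"
  shows "(\<Sum>j<2*E. g j) = (\<Sum>n<E. g (2*n) + g (2*n+1))"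
  by (induction E) (simp_all add: add.assoc)

lemma sum_mult_eq_0_if_const:
  fixes g h :: "'a \<Rightarrow> real"
  assumes "\<forall>i\<in>v. \<forall>j\<in>v. h i = h j" and "(\<Sum>j\<in>v. g j) = 0"
  shows "(\<Sum>j\<in>v. g j * h j) = 0"
proof (cases "v = {}")
  case False
  then obtain j0 where "j0 \<in> v" by blast
  then have "(\<Sum>j\<in>v. g j * h j) = (\<Sum>j\<in>v. g j * h j0)"
    using assms(1) by (metis (no_types, lifting) sum.cong)
  also have "\<dots> = (\<Sum>j\<in>v. g j) * h j0" by (simp add: sum_distrib_right)
  finally show ?thesis using assms(2) by simp
qed simp

lemma connected_graph_propagate:
  assumes "connected_graph E V" "v0 \<in> V" "Z v0"
    and edge: "\<And>n u w. n < E \<Longrightarrow> u \<in> V \<Longrightarrow> w \<in> V \<Longrightarrow> 2*n \<in> u \<Longrightarrow> 2*n+1 \<in> w \<Longrightarrow> Z u \<longleftrightarrow> Z w"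
    and "v \<in> V"
  shows "Z v"
proof -
  have "(v0, v) \<in> (vadj E V)\<^sup>*" using assms(1,2,5) unfolding connected_graph_def by blast
  then show ?thesis
  proof (induction rule: rtrancl_induct)
    case (step u w)
    from step.hyps(2) obtain n where "n < E" "u \<in> V" "w \<in> V"
      "(2*n \<in> u \<and> 2*n+1 \<in> w) \<or> (2*n+1 \<in> u \<and> 2*n \<in> w)"
      unfolding vadj_def by blast
    then show ?case using edge[of n u w] edge[of n w u] step.IH by blast
  qed (fact assms(3))
qed

definition edgewise_const :: "nat \<Rightarrow> (nat \<Rightarrow> real) \<Rightarrow> (nat \<Rightarrow> real) \<Rightarrow> (nat \<Rightarrow> real) \<Rightarrow> nat \<Rightarrow> real \<Rightarrow> real" where
  "edgewise_const E a b c n x = (if n < E \<and> x \<in> {a n..b n} then c n else 0)"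

definition incidence :: "nat set \<Rightarrow> nat \<Rightarrow> real" where
  "incidence v n = (if 2*n \<in> v then 1 else 0) + (if 2*n+1 \<in> v then 1 else 0)"

lemma edgewise_const_lincomb:
  "edgewise_const E a b (lincomb d c u) = (\<lambda>n x. \<Sum>k<d. c k * edgewise_const E a b (u k) n x)"
  by (auto simp: edgewise_const_def lincomb_def fun_eq_iff)

lemma edgewise_const_has_derivative:
  assumes "n < E" "x \<in> {a n..b n}"
  shows "(edgewise_const E a b c n has_real_derivative 0) (at x within {a n..b n})"
proof -
  have "((\<lambda>_. c n) has_real_derivative 0) (at x within {a n..b n})" by simp
  then show ?thesis
    by (rule has_field_derivative_transform_within[where d=1])
      (use assms in \<open>auto simp: edgewise_const_def\<close>)
qed

lemma edge_harmonic_edgewise_const: "edge_harmonic E a b (edgewise_const E a b c)"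
  unfolding edge_harmonic_def
proof (intro conjI allI impI)
  fix n assume "n < E"
  show "\<exists>g'. (\<forall>x\<in>{a n..b n}. (edgewise_const E a b c n has_real_derivative g' x) (at x within {a n..b n}))
      \<and> (\<forall>x\<in>{a n..b n}. (g' has_real_derivative 0) (at x within {a n..b n}))"
    by (rule exI[of _ "\<lambda>_. 0"]) (simp add: edgewise_const_has_derivative[OF \<open>n < E\<close>])
qed (auto simp: edgewise_const_def)

locale metric_graph =
  fixes E :: nat and a b :: "nat \<Rightarrow> real" and V :: "nat set set"
  assumes graph: "is_metric_graph E a b V"
begin

lemma edge_nondegenerate: "n < E \<Longrightarrow> a n < b n"
  using graph by (simp add: is_metric_graph_def)

lemma vertex_subset: "v \<in> V \<Longrightarrow> v \<subseteq> {..<2*E}"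
  using graph by (auto simp: is_metric_graph_def)

lemma finite_vertices: "finite V"
  using vertex_subset by (intro finite_subset[of V "Pow {..<2*E}"]) auto

lemma endpoint_in_vertex: "j < 2*E \<Longrightarrow> \<exists>v\<in>V. j \<in> v"
  using graph by (auto simp: is_metric_graph_def)

lemma vertex_eqI: "v \<in> V \<Longrightarrow> w \<in> V \<Longrightarrow> j \<in> v \<Longrightarrow> j \<in> w \<Longrightarrow> v = w"
  using graph unfolding is_metric_graph_def by blast

lemma sum_endpoints_by_vertex: "(\<Sum>j<2*E. g j) = (\<Sum>v\<in>V. \<Sum>j\<in>v. g j)"
proof -
  have "{..<2*E} = \<Union>V" using vertex_subset endpoint_in_vertex by auto
  moreover have "(\<Sum>j\<in>\<Union>V. g j) = (\<Sum>v\<in>V. \<Sum>j\<in>v. g j)"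
  proof (rule sum.Union_disjoint[simplified])
    show "\<forall>v\<in>V. finite v" using vertex_subset finite_subset by blast
    show "\<forall>v\<in>V. \<forall>w\<in>V. v \<noteq> w \<longrightarrow> v \<inter> w = {}" using vertex_eqI by blast
  qed
  ultimately show ?thesis by simp
qed

lemma sum_vertex_incidence:
  assumes "v \<in> V"
  shows "(\<Sum>j\<in>v. c (j div 2)) = (\<Sum>n<E. incidence v n * c n)"
proof -
  have "(\<Sum>j\<in>v. c (j div 2)) = (\<Sum>j<2*E. if j \<in> v then c (j div 2) else 0)"
    using vertex_subset[OF assms] by (simp add: sum.If_cases Int_absorb1)
  also have "\<dots> = (\<Sum>n<E. incidence v n * c n)"
    unfolding sum_lessThan_double by (intro sum.cong) (auto simp: incidence_def distrib_right)
  finally show ?thesis .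
qed

lemma sum_vertices_containing:
  assumes "W \<subseteq> V" "u \<in> V" "j \<in> u"
  shows "(\<Sum>v\<in>W. if j \<in> v then \<psi> v else 0) = (if u \<in> W then \<psi> u else 0 :: real)"
proof -
  have "(\<Sum>v\<in>W. if j \<in> v then \<psi> v else 0) = (\<Sum>v\<in>W. if u = v then \<psi> v else 0)"
  proof (rule sum.cong)
    fix v assume "v \<in> W"
    then have "j \<in> v \<longleftrightarrow> u = v" using assms vertex_eqI[of u v j] by blast
    then show "(if j \<in> v then \<psi> v else 0) = (if u = v then \<psi> v else 0)" by simp
  qed simp
  then show ?thesis using finite_subset[OF assms(1) finite_vertices] by simp
qed

lemma edge_harmonic_edge:
  assumes "edge_harmonic E a b f" "n < E"
  shows edge_harmonic_affine:
      "x \<in> {a n..b n} \<Longrightarrow> f n x = endval a b f (2*n) + endder a b f (2*n) * (x - a n)"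
    and edge_harmonic_endder: "endder a b f (2*n+1) = - endder a b f (2*n)"
    and edge_harmonic_endval:
      "endval a b f (2*n+1) = endval a b f (2*n) + endder a b f (2*n) * (b n - a n)"
proof -
  obtain g' where "\<forall>x\<in>{a n..b n}. (f n has_real_derivative g' x) (at x within {a n..b n})"
    "\<forall>x\<in>{a n..b n}. (g' has_real_derivative 0) (at x within {a n..b n})"
    using assms unfolding edge_harmonic_def by blast
  then obtain s where affine: "\<forall>x\<in>{a n..b n}. f n x = f n (a n) + s * (x - a n)"
    and "vector_derivative (f n) (at (a n) within {a n..b n}) = s"
    and "vector_derivative (f n) (at (b n) within {a n..b n}) = s"
    by (rule affine_if_second_derivative_zero[OF edge_nondegenerate[OF assms(2)]])
  then have ends: "endder a b f (2*n) = s" "endder a b f (2*n+1) = - s"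
      "endval a b f (2*n) = f n (a n)" "endval a b f (2*n+1) = f n (b n)"
    by (simp_all add: endder_def endval_def Let_def)
  show "x \<in> {a n..b n} \<Longrightarrow> f n x = endval a b f (2*n) + endder a b f (2*n) * (x - a n)"
    unfolding ends by (rule affine[rule_format])
  show "endder a b f (2*n+1) = - endder a b f (2*n)"
    unfolding ends ..
  show "endval a b f (2*n+1) = endval a b f (2*n) + endder a b f (2*n) * (b n - a n)"
    unfolding ends using edge_nondegenerate[OF assms(2)] by (intro affine[rule_format]) auto
qed

text \<open>Green's formula \<open>\<integral>\<^sub>\<Gamma> f'' f = -\<integral>\<^sub>\<Gamma> (f')\<^sup>2 - \<Sum>\<^sub>j \<partial>f(x\<^sub>j) f(x\<^sub>j)\<close> for \<open>f'' = 0\<close>.\<close>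
lemma edge_harmonic_boundary_form:
  assumes "edge_harmonic E a b f"
  shows "(\<Sum>j<2*E. endder a b f j * endval a b f j)
       = - (\<Sum>n<E. (endder a b f (2*n))\<^sup>2 * (b n - a n))"
  unfolding sum_lessThan_double sum_negf[symmetric]
proof (rule sum.cong)
  fix n assume "n \<in> {..<E}"
  then have n: "n < E" by simp
  show "endder a b f (2*n) * endval a b f (2*n) + endder a b f (2*n+1) * endval a b f (2*n+1)
      = - ((endder a b f (2*n))\<^sup>2 * (b n - a n))"
    unfolding edge_harmonic_endder[OF assms n] edge_harmonic_endval[OF assms n]
    by (simp add: algebra_simps power2_eq_square)
qed simp

lemma edge_harmonic_eq_edgewise_const:
  assumes "edge_harmonic E a b f" "\<forall>n<E. endder a b f (2*n) = 0"
  shows "f = edgewise_const E a b (\<lambda>n. endval a b f (2*n))"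
proof (intro ext)
  fix n x
  show "f n x = edgewise_const E a b (\<lambda>n. endval a b f (2*n)) n x"
  proof (cases "n < E \<and> x \<in> {a n..b n}")
    case True
    then show ?thesis using assms edge_harmonic_affine[OF assms(1)] by (simp add: edgewise_const_def)
  next
    case False
    then have "f n x = 0" using assms(1) unfolding edge_harmonic_def by (cases "n < E") auto
    with False show ?thesis by (auto simp: edgewise_const_def)
  qed
qed

lemma edgewise_const_endval:
  assumes "j < 2*E"
  shows "endval a b (edgewise_const E a b c) j = c (j div 2)"
proof -
  have "j div 2 < E" using assms by simp
  then show ?thesis
    using edge_nondegenerate[of "j div 2"] by (simp add: endval_def edgewise_const_def less_imp_le)
qed

lemma edgewise_const_endder:
  assumes "j < 2*E"
  shows "endder a b (edgewise_const E a b c) j = 0"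
proof -
  define n where "n = j div 2"
  have n: "n < E" using assms by (simp add: n_def)
  have "vector_derivative (edgewise_const E a b c n) (at x within {a n..b n}) = 0"
    if "x \<in> {a n..b n}" for x
    using edge_nondegenerate[OF n] that edgewise_const_has_derivative[of n E x a b c] n
    by (intro vector_derivative_within_closed_interval)
      (auto simp: has_real_derivative_iff_has_vector_derivative)
  then show ?thesis
    using edge_nondegenerate[OF n] unfolding endder_def Let_def n_def[symmetric] by simp
qed

lemma sum_edgewise_const_endval:
  assumes "v \<in> V"
  shows "(\<Sum>j\<in>v. endval a b (edgewise_const E a b c) j) = (\<Sum>n<E. incidence v n * c n)"
proof -
  have "(\<Sum>j\<in>v. endval a b (edgewise_const E a b c) j) = (\<Sum>j\<in>v. c (j div 2))"
  proof (rule sum.cong)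
    fix j assume "j \<in> v"
    then have "j < 2*E" using vertex_subset[OF assms] by auto
    then show "endval a b (edgewise_const E a b c) j = c (j div 2)" by (rule edgewise_const_endval)
  qed simp
  also have "\<dots> = (\<Sum>n<E. incidence v n * c n)" by (rule sum_vertex_incidence[OF assms])
  finally show ?thesis .
qed

end

locale graph_with_boundary = metric_graph +
  fixes B :: "nat set set"
  assumes connected: "connected_graph E V"
    and boundary: "B \<subseteq> graph_boundary V"
    and boundary_nonempty: "B \<noteq> {}"
begin

lemma boundary_vertices: "B \<subseteq> V"
  using boundary by (auto simp: graph_boundary_def)

lemma boundary_singleton: "v \<in> B \<Longrightarrow> \<exists>j. v = {j}"
  using boundary by (auto simp: graph_boundary_def card_1_singleton_iff)

lemma propagate_from_boundary:
  assumes "\<forall>v\<in>B. Z v"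
    and "\<And>n u w. n < E \<Longrightarrow> u \<in> V \<Longrightarrow> w \<in> V \<Longrightarrow> 2*n \<in> u \<Longrightarrow> 2*n+1 \<in> w \<Longrightarrow> Z u \<longleftrightarrow> Z w"
    and "v \<in> V"
  shows "Z v"
proof -
  obtain v0 where "v0 \<in> B" using boundary_nonempty by blast
  show ?thesis
  proof (rule connected_graph_propagate[OF connected _ _ assms(2,3)])
    show "v0 \<in> V" "Z v0" using \<open>v0 \<in> B\<close> boundary_vertices assms(1) by auto
  qed
qed

lemma vertex_vanishing_iff:
  assumes "\<forall>v\<in>V - B. \<forall>i\<in>v. \<forall>j\<in>v. g i = g j" "v \<in> V" "j \<in> v"
  shows "(\<forall>i\<in>v. g i = 0) \<longleftrightarrow> g j = 0"
proof (cases "v \<in> B")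
  case True
  then obtain i where "v = {i}" using boundary_singleton by blast
  then show ?thesis using assms(3) by simp
next
  case False
  then have "\<forall>i\<in>v. g i = g j" using assms by blast
  then show ?thesis using assms(3) by metis
qed

subsection \<open>The standard operator with Dirichlet conditions on \<open>B\<close>\<close>

lemma ker_stD_slopes_zero:
  assumes f: "f \<in> ker_stD E a b V B" and "n < E"
  shows "endder a b f (2*n) = 0"
proof -
  from f have harmonic: "edge_harmonic E a b f"
    and dirichlet: "\<forall>v\<in>B. \<forall>j\<in>v. endval a b f j = 0"
    and continuity: "\<forall>v\<in>V - B. \<forall>i\<in>v. \<forall>j\<in>v. endval a b f i = endval a b f j"
    and kirchhoff: "\<forall>v\<in>V - B. (\<Sum>j\<in>v. endder a b f j) = 0"
    unfolding ker_stD_def by blast+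
  have "(\<Sum>j\<in>v. endder a b f j * endval a b f j) = 0" if "v \<in> V" for v
  proof (cases "v \<in> B")
    case True
    then show ?thesis using dirichlet by (intro sum.neutral) simp
  next
    case False
    then show ?thesis
      using continuity kirchhoff that by (intro sum_mult_eq_0_if_const) blast+
  qed
  then have "(\<Sum>j<2*E. endder a b f j * endval a b f j) = 0"
    unfolding sum_endpoints_by_vertex by (intro sum.neutral) blast
  then have "(\<Sum>n<E. (endder a b f (2*n))\<^sup>2 * (b n - a n)) = 0"
    using edge_harmonic_boundary_form[OF harmonic] by simp
  moreover have "\<forall>n\<in>{..<E}. 0 \<le> (endder a b f (2*n))\<^sup>2 * (b n - a n)"
    using edge_nondegenerate by (simp add: less_imp_le)
  ultimately have "(endder a b f (2*n))\<^sup>2 * (b n - a n) = 0"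
    using sum_nonneg_eq_0_iff[of "{..<E}" "\<lambda>m. (endder a b f (2*m))\<^sup>2 * (b m - a m)"] \<open>n < E\<close>
    by blast
  then show ?thesis using edge_nondegenerate[OF \<open>n < E\<close>] by simp
qed

lemma ker_stD_trivial:
  assumes f: "f \<in> ker_stD E a b V B"
  shows "f = (\<lambda>n x. 0)"
proof -
  from f have harmonic: "edge_harmonic E a b f"
    and dirichlet: "\<forall>v\<in>B. \<forall>j\<in>v. endval a b f j = 0"
    and continuity: "\<forall>v\<in>V - B. \<forall>i\<in>v. \<forall>j\<in>v. endval a b f i = endval a b f j"
    unfolding ker_stD_def by blast+
  have slopes: "\<forall>n<E. endder a b f (2*n) = 0" using ker_stD_slopes_zero[OF f] by blast
  have vanish: "\<forall>j\<in>v. endval a b f j = 0" if "v \<in> V" for v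
  proof (rule propagate_from_boundary[OF _ _ that])
    show "\<forall>v\<in>B. \<forall>j\<in>v. endval a b f j = 0" by (fact dirichlet)
    fix n u w assume "n < E" "u \<in> V" "w \<in> V" "2*n \<in> u" "2*n+1 \<in> w"
    moreover from \<open>n < E\<close> have "endval a b f (2*n+1) = endval a b f (2*n)"
      using edge_harmonic_endval[OF harmonic] slopes by simp
    ultimately show "(\<forall>j\<in>u. endval a b f j = 0) \<longleftrightarrow> (\<forall>j\<in>w. endval a b f j = 0)"
      using vertex_vanishing_iff[OF continuity] by simp
  qed
  have "endval a b f (2*n) = 0" if "n < E" for n
    using vanish endpoint_in_vertex[of "2*n"] that by auto
  then show ?thesis
    using edge_harmonic_eq_edgewise_const[OF harmonic slopes]
    by (simp add: edgewise_const_def fun_eq_iff)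
qed

lemma has_dim_ker_stD: "has_dim (ker_stD E a b V B) 0"
  using ker_stD_trivial by (simp add: has_dim_def)

subsection \<open>The anti-standard operator with Neumann conditions on \<open>B\<close>\<close>

lemma ker_astN_slopes_zero:
  assumes f: "f \<in> ker_astN E a b V B" and "n < E"
  shows "endder a b f (2*n) = 0"
proof -
  from f have harmonic: "edge_harmonic E a b f"
    and neumann: "\<forall>v\<in>B. \<forall>j\<in>v. endder a b f j = 0"
    and equal_derivatives: "\<forall>v\<in>V - B. \<forall>i\<in>v. \<forall>j\<in>v. endder a b f i = endder a b f j"
    unfolding ker_astN_def by blast+
  have vanish: "\<forall>j\<in>v. endder a b f j = 0" if "v \<in> V" for v
  proof (rule propagate_from_boundary[OF _ _ that])
    show "\<forall>v\<in>B. \<forall>j\<in>v. endder a b f j = 0" by (fact neumann)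
    fix n u w assume "n < E" "u \<in> V" "w \<in> V" "2*n \<in> u" "2*n+1 \<in> w"
    then show "(\<forall>j\<in>u. endder a b f j = 0) \<longleftrightarrow> (\<forall>j\<in>w. endder a b f j = 0)"
      using vertex_vanishing_iff[OF equal_derivatives] edge_harmonic_endder[OF harmonic \<open>n < E\<close>] by simp
  qed
  then show ?thesis using endpoint_in_vertex[of "2*n"] \<open>n < E\<close> by auto
qed

lemma ker_astN_eq_image:
  "ker_astN E a b V B = edgewise_const E a b ` solutions {..<E} (V - B) incidence"
proof (intro set_eqI iffI)
  fix f assume f: "f \<in> ker_astN E a b V B"
  from f have harmonic: "edge_harmonic E a b f"
    and vanishing_sums: "\<forall>v\<in>V - B. (\<Sum>j\<in>v. endval a b f j) = 0"
    unfolding ker_astN_def by blast+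
  have slopes: "\<forall>n<E. endder a b f (2*n) = 0" using ker_astN_slopes_zero[OF f] by blast
  define c where "c n = (if n < E then endval a b f (2*n) else 0)" for n
  have f_eq: "f = edgewise_const E a b c"
    using edge_harmonic_eq_edgewise_const[OF harmonic slopes]
    by (simp add: c_def edgewise_const_def fun_eq_iff)
  have "(\<Sum>n<E. incidence v n * c n) = 0" if "v \<in> V - B" for v
  proof -
    have "(\<Sum>n<E. incidence v n * c n) = (\<Sum>j\<in>v. endval a b f j)"
      using that sum_edgewise_const_endval[of v c] f_eq by simp
    then show ?thesis using vanishing_sums that by simp
  qed
  then have "c \<in> solutions {..<E} (V - B) incidence"
    by (simp add: solutions_def c_def)
  then show "f \<in> edgewise_const E a b ` solutions {..<E} (V - B) incidence"
    using f_eq by blast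
next
  fix f assume "f \<in> edgewise_const E a b ` solutions {..<E} (V - B) incidence"
  then obtain c where c: "c \<in> solutions {..<E} (V - B) incidence" "f = edgewise_const E a b c"
    by blast
  have sums: "(\<Sum>j\<in>v. endval a b f j) = 0" if "v \<in> V - B" for v
    using that c sum_edgewise_const_endval[of v c] by (simp add: solutions_def)
  have slopes: "\<forall>j\<in>v. endder a b f j = 0" if "v \<in> V" for v
    using c(2) vertex_subset[OF that] by (auto simp: edgewise_const_endder)
  show "f \<in> ker_astN E a b V B"
    unfolding ker_astN_def using c(2) sums slopes boundary_vertices
    by (auto simp: edge_harmonic_edgewise_const)
qed

lemma rows_independent_incidence: "rows_independent {..<E} (V - B) incidence"
  unfolding rows_independent_def
proof (intro allI impI ballI)
  fix \<psi> v
  assume \<psi>: "\<forall>n\<in>{..<E}. (\<Sum>v\<in>V - B. \<psi> v * incidence v n) = 0" and "v \<in> V - B"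
  define \<Psi> where "\<Psi> v = (if v \<in> V - B then \<psi> v else 0)" for v
  have "\<Psi> v = 0"
  proof (rule propagate_from_boundary)
    show "\<forall>v\<in>B. \<Psi> v = 0" by (simp add: \<Psi>_def)
    show "v \<in> V" using \<open>v \<in> V - B\<close> by blast
    fix n u w assume "n < E" "u \<in> V" "w \<in> V" "2*n \<in> u" "2*n+1 \<in> w"
    have "(\<Sum>v\<in>V - B. \<psi> v * incidence v n)
        = (\<Sum>v\<in>V - B. if 2*n \<in> v then \<psi> v else 0) + (\<Sum>v\<in>V - B. if 2*n+1 \<in> v then \<psi> v else 0)"
      unfolding incidence_def sum.distrib[symmetric] by (rule sum.cong) (simp_all add: distrib_left)
    also have "\<dots> = \<Psi> u + \<Psi> w"
      using sum_vertices_containing[of "V - B" u "2*n" \<psi>] sum_vertices_containing[of "V - B" w "2*n+1" \<psi>]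
        \<open>u \<in> V\<close> \<open>w \<in> V\<close> \<open>2*n \<in> u\<close> \<open>2*n+1 \<in> w\<close> by (simp add: \<Psi>_def)
    finally have "(\<Sum>v\<in>V - B. \<psi> v * incidence v n) = \<Psi> u + \<Psi> w" .
    then show "\<Psi> u = 0 \<longleftrightarrow> \<Psi> w = 0" using \<psi> \<open>n < E\<close> by auto
  qed
  then show "\<psi> v = 0" using \<open>v \<in> V - B\<close> by (simp add: \<Psi>_def)
qed

lemma card_vertices_outside_boundary_le: "card (V - B) \<le> E"
  using has_fun_dim_solutions[OF _ _ rows_independent_incidence] finite_vertices by auto

lemma has_dim_ker_astN: "has_dim (ker_astN E a b V B) (E - card (V - B))"
proof -
  have dim: "has_fun_dim (solutions {..<E} (V - B) incidence) (E - card (V - B))"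
    using has_fun_dim_solutions[OF _ _ rows_independent_incidence] finite_vertices by auto
  have inj: "y = (\<lambda>_. 0)"
    if "y \<in> solutions {..<E} (V - B) incidence" "case_prod (edgewise_const E a b y) = (\<lambda>_. 0)" for y
  proof
    fix n
    show "y n = 0"
      using that(1) edge_nondegenerate[of n] fun_cong[OF that(2), of "(n, a n)"]
      by (cases "n < E") (auto simp: solutions_def edgewise_const_def)
  qed
  have "has_fun_dim (case_prod ` ker_astN E a b V B) (E - card (V - B))"
    by (rule has_fun_dim_transfer[OF dim, of "\<lambda>y. case_prod (edgewise_const E a b y)"])
      (auto simp: ker_astN_eq_image image_image edgewise_const_lincomb lincomb_def
        solutions_lincomb inj)
  then show ?thesis by (rule has_dim_if_has_fun_dim_uncurried)
qed

end

theorem mainTheorem8: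
  fixes E :: nat and a b :: "nat \<Rightarrow> real" and V B :: "nat set set"
  assumes "is_metric_graph E a b V"
    and "connected_graph E V"
    and "bipartite_graph E V"
    and "B \<subseteq> graph_boundary V" and "B \<noteq> {}"
  shows "has_dim (ker_stD E a b V B) 0
       \<and> has_dim (ker_astN E a b V B) (nat (betti E V + int (card B) - 1))
       \<and> betti E V + int (card B) - 1 \<ge> 0"
proof -
  interpret graph_with_boundary E a b V B
    using assms by (simp add: graph_with_boundary_def graph_with_boundary_axioms_def metric_graph_def)
  have "card (V - B) = card V - card B" "card B \<le> card V"
    using boundary_vertices finite_vertices by (auto simp: card_Diff_subset card_mono finite_subset)
  then have betti: "betti E V + int (card B) - 1 = int (E - card (V - B))"
    using card_vertices_outside_boundary_le by (simp add: betti_def of_nat_diff le_diff_conv)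
  show ?thesis
    unfolding betti nat_int using has_dim_ker_stD has_dim_ker_astN by simp
qed

end
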